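(* In the setting described in the context, let $p$ be a facet of $\Delta_\lambda$ of $\mathbf a$-degree at least $1$, with its nodes labelled $1,\dots,k-1$ so that $p$ is identified with the simplex on $[k-1]$. If $[k-1]\setminus\{i,i+1\}$ is a facet of $F_{<p}\cap p$, then neither $[k-1]\setminus\{i+1,i+2\}$ nor $[k-1]\setminus\{i+2,i+3\}$ is a facet of $F_{<p}\cap p$.
   Context: Let $n,d\ge2$, $V(n,d)=\{\mathbf b\in\mathbb N^n:\sum_i b_i=d\}$, and let $\mathbf a\in V(n,d)$ satisfy $a_1\le\dots\le a_n$ and $\mathbf a\notin\{(0,\dots,0,d),(0,\dots,0,1,d-1),(0,\dots,0,2,d-2)\}$. Let $\Gamma=V(n,d)\setminus\{\mathbf a\}$ and assume $\Gamma+\Gamma=V(n,2d)$. Order $V(n,d)$ lexicographically ($b<c$ iff the first nonzero coordinate of $c-b$ is positive). Let $\lambda$ be in the semigroup generated by $\Gamma$, $k=|\lambda|=(\sum_i\lambda_i)/d$. A closed chain from $0$ to $\lambda$ is a sequence $0=v_0,v_1,\dots,v_k=\lambda$ in $\mathbb N^n$ with all links $v_j-v_{j-1}\in V(n,d)$; its $\mathbf a$-degree is the number of links equal to $\mathbf a$; its open chain is $\{v_1,\dots,v_{k-1}\}$, with $v_j$ labelled $j$. $\Delta_\lambda$ is the simplicial complex whose facets are all these open chains. Facets are ordered: $q<p$ iff $\mathbf a$-degree of $q$ is smaller than that of $p$, or equal and the link sequence of $q$ is lexicographically smaller than that of $p$ (first links compared first, using the order on $V(n,d)$). $F_{<p}$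 is the subcomplex of $\Delta_\lambda$ generated by the facets $q<p$; $p$ also denotes the full simplex on its nodes. *)

theory Defs
  imports Main
begin

text \<open>Vectors in N^n are functions nat => nat vanishing outside the index range 0..n-1
  (coordinate i of the paper is index i-1 here).\<close>

definition vec :: "nat \<Rightarrow> (nat \<Rightarrow> nat) \<Rightarrow> bool" where
  "vec n b \<longleftrightarrow> (\<forall>i\<ge>n. b i = 0)"

definition V :: "nat \<Rightarrow> nat \<Rightarrow> (nat \<Rightarrow> nat) set" where
  "V n d = {b. vec n b \<and> (\<Sum>i<n. b i) = d}"

definition vadd :: "(nat \<Rightarrow> nat) \<Rightarrow> (nat \<Rightarrow> nat) \<Rightarrow> (nat \<Rightarrow> nat)" where
  "vadd b c = (\<lambda>i. b i + c i)"

definition sumset :: "(nat \<Rightarrow> nat) set \<Rightarrow> (nat \<Rightarrow> nat) set \<Rightarrow> (nat \<Rightarrow> nat) set" where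
  "sumset A B = {vadd b c | b c. b \<in> A \<and> c \<in> B}"

inductive_set gen_semigroup :: "(nat \<Rightarrow> nat) set \<Rightarrow> (nat \<Rightarrow> nat) set" for G where
  zero: "(\<lambda>_. 0) \<in> gen_semigroup G"
| add: "s \<in> gen_semigroup G \<Longrightarrow> g \<in> G \<Longrightarrow> vadd s g \<in> gen_semigroup G"

definition lexless :: "nat \<Rightarrow> (nat \<Rightarrow> nat) \<Rightarrow> (nat \<Rightarrow> nat) \<Rightarrow> bool" where
  "lexless n b c \<longleftrightarrow> (\<exists>j<n. (\<forall>i<j. b i = c i) \<and> b j < c j)"

text \<open>Closed chains from 0 to lam, represented by their link sequences.\<close>
definition node :: "(nat \<Rightarrow> nat) list \<Rightarrow> nat \<Rightarrow> (nat \<Rightarrow> nat)" where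
  "node ls j = (\<lambda>t. \<Sum>m<j. (ls ! m) t)"

definition chains :: "nat \<Rightarrow> nat \<Rightarrow> (nat \<Rightarrow> nat) \<Rightarrow> (nat \<Rightarrow> nat) list set" where
  "chains n d lam = {ls. set ls \<subseteq> V n d \<and> node ls (length ls) = lam}"

definition open_chain :: "(nat \<Rightarrow> nat) list \<Rightarrow> (nat \<Rightarrow> nat) set" where
  "open_chain ls = node ls ` {1..<length ls}"

definition adeg :: "(nat \<Rightarrow> nat) \<Rightarrow> (nat \<Rightarrow> nat) list \<Rightarrow> nat" where
  "adeg a ls = length (filter (\<lambda>l. l = a) ls)"

definition seqless :: "nat \<Rightarrow> (nat \<Rightarrow> nat) list \<Rightarrow> (nat \<Rightarrow> nat) list \<Rightarrow> bool" where
  "seqless n ls ms \<longleftrightarrow>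
     (\<exists>j<min (length ls) (length ms). (\<forall>m<j. ls ! m = ms ! m) \<and> lexless n (ls ! j) (ms ! j))"

definition facet_less :: "nat \<Rightarrow> (nat \<Rightarrow> nat) \<Rightarrow> (nat \<Rightarrow> nat) list \<Rightarrow> (nat \<Rightarrow> nat) list \<Rightarrow> bool" where
  "facet_less n a q p \<longleftrightarrow> adeg a q < adeg a p \<or> (adeg a q = adeg a p \<and> seqless n q p)"

definition F_less :: "nat \<Rightarrow> nat \<Rightarrow> (nat \<Rightarrow> nat) \<Rightarrow> (nat \<Rightarrow> nat) \<Rightarrow> (nat \<Rightarrow> nat) list
    \<Rightarrow> (nat \<Rightarrow> nat) set set" where
  "F_less n d a lam p = {\<sigma>. \<exists>q \<in> chains n d lam. facet_less n a q p \<and> \<sigma> \<subseteq> open_chain q}"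

text \<open>F_{<p} \<inter> p, where p is the full simplex on its nodes.\<close>
definition F_less_cap :: "nat \<Rightarrow> nat \<Rightarrow> (nat \<Rightarrow> nat) \<Rightarrow> (nat \<Rightarrow> nat) \<Rightarrow> (nat \<Rightarrow> nat) list
    \<Rightarrow> (nat \<Rightarrow> nat) set set" where
  "F_less_cap n d a lam p = F_less n d a lam p \<inter> Pow (open_chain p)"

definition is_facet :: "'x set set \<Rightarrow> 'x set \<Rightarrow> bool" where
  "is_facet K \<sigma> \<longleftrightarrow> \<sigma> \<in> K \<and> (\<forall>\<tau>\<in>K. \<sigma> \<subseteq> \<tau> \<longrightarrow> \<tau> = \<sigma>)"

text \<open>The face of p labelled by S (node v_j has label j).\<close>
definition labelled_face :: "(nat \<Rightarrow> nat) list \<Rightarrow> nat set \<Rightarrow> (nat \<Rightarrow> nat) set" where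
  "labelled_face p S = node p ` S"

end

theory Submission
  imports Defs
begin

text \<open>Let \<open>x, y, z\<close> be the links of \<open>p\<close> around the two missing nodes. If a consecutive pair of
  them could be traded for a pair with the same sum that uses \<open>a\<close> less often, or equally often
  but with a lex-smaller first link, the face of \<open>p\<close> missing only the node between them would lie
  in \<open>F_{<p}\<close>, contradicting facetness; with \<open>\<Gamma> + \<Gamma> = V(n,2d)\<close> this makes both pairs minimal
  splits avoiding \<open>a\<close>. A chain below \<open>p\<close> through the remaining nodes differs from \<open>p\<close> only in
  these three links and, by minimality of \<open>(y, z)\<close>, first differs at \<open>x\<close>, so some degree-\<open>d\<close>
  divisor \<open>m \<noteq> a\<close> of \<open>x + y + z\<close> is lex-smaller than \<open>x\<close>. Comparing \<open>x\<close> and \<open>y\<close> with the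
  lex-least degree-\<open>d\<close> divisors of \<open>x + y\<close> and \<open>y + z\<close>, and using the excluded shapes of \<open>a\<close>,
  this forces \<open>x\<close> to be the second smallest element \<open>c = e\<^sub>n\<^sub>-\<^sub>1 + (d - 1) e\<^sub>n\<close> of \<open>V(n,d)\<close>.
  A second facet one or two steps later would make \<open>y\<close> or \<open>z\<close> equal to \<open>c\<close> as well, giving
  minimal splits \<open>(c, c)\<close>, refuted by \<open>c + c = d e\<^sub>n + (2 e\<^sub>n\<^sub>-\<^sub>1 + (d - 2) e\<^sub>n)\<close>,
  or \<open>(c, y), (y, c)\<close>, refuted by swapping.\<close>

section \<open>Lexicographic order and degree\<close>

lemma lexless_irrefl: "\<not> lexless n b b"
  by (auto simp: lexless_def)

lemma lexless_trans:
  assumes "lexless n x y" "lexless n y z"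
  shows "lexless n x z"
proof -
  obtain j1 where j1: "j1 < n" "\<forall>i<j1. x i = y i" "x j1 < y j1"
    using assms(1) by (auto simp: lexless_def)
  obtain j2 where j2: "j2 < n" "\<forall>i<j2. y i = z i" "y j2 < z j2"
    using assms(2) by (auto simp: lexless_def)
  show ?thesis
  proof (cases "j1 \<le> j2")
    case True
    then show ?thesis using j1 j2 unfolding lexless_def
      by (intro exI[of _ j1]) (auto simp: le_less)
  next
    case False
    then show ?thesis using j1 j2 unfolding lexless_def by (intro exI[of _ j2]) auto
  qed
qed

lemma lexless_total:
  assumes "vec n x" "vec n y" "x \<noteq> y"
  shows "lexless n x y \<or> lexless n y x"
proof -
  obtain i where "x i \<noteq> y i" using assms(3) by auto
  define j where "j = (LEAST i. x i \<noteq> y i)"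
  have jd: "x j \<noteq> y j" using \<open>x i \<noteq> y i\<close> unfolding j_def by (rule LeastI)
  have below: "\<forall>k<j. x k = y k" unfolding j_def using not_less_Least by blast
  have "j < n" using assms(1,2) jd by (auto simp: vec_def) (metis not_le)
  then show ?thesis
    using jd below unfolding lexless_def by (cases "x j < y j") auto
qed

lemma lex_minimal_exists:
  assumes "finite A" "A \<noteq> {}"
  shows "\<exists>m\<in>A. \<forall>b\<in>A. \<not> lexless n b m"
  using assms
proof (induction A rule: finite_ne_induct)
  case (singleton x)
  then show ?case by (auto simp: lexless_irrefl)
next
  case (insert x F)
  then obtain m where m: "m \<in> F" "\<forall>b\<in>F. \<not> lexless n b m" by blast
  show ?case
  proof (cases "lexless n x m")
    case True
    then show ?thesis using m lexless_trans lexless_irrefl by (intro bexI[of _ x]) blast+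
  next
    case False
    then show ?thesis using m by (intro bexI[of _ m]) auto
  qed
qed

lemma same_sum_tail_excess:
  fixes b c :: "nat \<Rightarrow> nat"
  assumes "sum b {..<n} = sum c {..<n}" "j < n" "\<forall>i<j. b i \<le> c i" "b j < c j"
  shows "\<exists>t. j < t \<and> t < n \<and> c t < b t"
proof (rule ccontr)
  assume "\<not> ?thesis"
  then have "\<forall>t\<in>{..<n}. b t \<le> c t"
    using assms(3,4) by (metis lessThan_iff linorder_neqE_nat not_le order.strict_implies_order)
  then have "sum b {..<n} < sum c {..<n}"
    using assms(2,4) by (intro sum_strict_mono_ex1) auto
  then show False using assms(1) by simp
qed

lemma le_same_sum_eq:
  fixes b c :: "nat \<Rightarrow> nat"
  assumes "vec n b" "vec n c" "\<forall>i<n. b i \<le> c i" "sum b {..<n} = sum c {..<n}"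
  shows "b = c"
proof (rule ccontr)
  assume "b \<noteq> c"
  then obtain i where "b i \<noteq> c i" by auto
  then have "i < n" using assms(1,2) by (auto simp: vec_def) (metis not_le)
  have "sum b {..<n} < sum c {..<n}"
    using assms(3) \<open>i < n\<close> \<open>b i \<noteq> c i\<close> by (intro sum_strict_mono_ex1) (auto intro!: bexI[of _ i])
  then show False using assms(4) by simp
qed

lemma exists_other_support:
  fixes y :: "nat \<Rightarrow> nat"
  assumes "y u0 < sum y {..<n}"
  shows "\<exists>u1. u1 \<noteq> u0 \<and> u1 < n \<and> 1 \<le> y u1"
proof (rule ccontr)
  assume "\<not> ?thesis"
  then have "sum y {..<n} = sum (\<lambda>i. if i = u0 then y u0 else 0) {..<n}"
    by (intro sum.cong) auto
  also have "\<dots> \<le> y u0" by (simp add: sum.delta)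
  finally show False using assms by simp
qed

lemma sum_split_two:
  fixes f :: "nat \<Rightarrow> nat"
  assumes "u \<noteq> t" "u < n" "t < n"
  shows "sum f {..<n} = f u + f t + sum f ({..<n} - {u} - {t})"
  using assms by (simp add: sum.remove[of "{..<n}" u] sum.remove[of "{..<n} - {u}" t])

lemma sum_supported_last:
  fixes m :: "nat \<Rightarrow> nat"
  assumes "1 \<le> n" "\<forall>i<n-1. m i = 0"
  shows "sum m {..<n} = m (n - 1)"
proof -
  have "n = Suc (n - 1)" using assms by simp
  then have "sum m {..<n} = sum m {..<n-1} + m (n-1)"
    by (metis sum.lessThan_Suc)
  then show ?thesis using assms by simp
qed

lemma sum_supported_last_two:
  fixes m :: "nat \<Rightarrow> nat"
  assumes "2 \<le> n" "\<forall>i<n-2. m i = 0"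
  shows "sum m {..<n} = m (n - 2) + m (n - 1)"
proof -
  have "n = Suc (Suc (n - 2))" using assms by simp
  then have "sum m {..<n} = sum m {..<n-2} + m (n-2) + m (Suc (n-2))"
    by (metis sum.lessThan_Suc)
  moreover have "Suc (n - 2) = n - 1" using assms by simp
  ultimately show ?thesis using assms by simp
qed

lemma vec_eqI:
  assumes "vec n m" "vec n f" "\<And>i. i < n \<Longrightarrow> m i = f i"
  shows "m = f"
proof
  fix i show "m i = f i"
    using assms by (cases "i < n") (auto simp: vec_def)
qed

lemma V_support_lt: "y \<in> V n d \<Longrightarrow> 0 < y v \<Longrightarrow> v < n"
  by (cases "v < n") (auto simp: V_def vec_def)

lemma V_support_exists:
  assumes "y \<in> V n d" "0 < d"
  shows "\<exists>v<n. 1 \<le> y v"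
proof (rule ccontr)
  assume "\<not> ?thesis"
  then have "sum y {..<n} = 0" by (simp add: not_less_eq_eq)
  then show False using assms by (simp add: V_def)
qed

lemma sum_add_V:
  assumes "x \<in> V n d" "y \<in> V n d"
  shows "sum (\<lambda>i. x i + y i) {..<n} = 2 * d"
  using assms by (simp add: V_def sum.distrib)

section \<open>Moving a unit between coordinates\<close>

definition shift :: "(nat \<Rightarrow> nat) \<Rightarrow> nat \<Rightarrow> nat \<Rightarrow> nat \<Rightarrow> nat" where
  "shift x u t = x(u := x u - 1, t := Suc (x t))"

lemma shift_apply:
  "shift x u t i = (if i = t then Suc (x t) else if i = u then x u - 1 else x i)"
  by (auto simp: shift_def)

lemma shift_in_V:
  assumes "x \<in> V n d" "u \<noteq> t" "u < n" "t < n" "1 \<le> x u"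
  shows "shift x u t \<in> V n d"
proof -
  have "sum (shift x u t) ({..<n} - {u} - {t}) = sum x ({..<n} - {u} - {t})"
    by (rule sum.cong) (auto simp: shift_def)
  then have "sum (shift x u t) {..<n} = sum x {..<n}"
    using sum_split_two[OF assms(2-4), of "shift x u t"] sum_split_two[OF assms(2-4), of x]
      assms(2,5)
    by (simp add: shift_def)
  then show ?thesis using assms by (auto simp: V_def vec_def shift_def)
qed

lemma shift_lexless:
  assumes "u < t" "t < n" "1 \<le> x u"
  shows "lexless n (shift x u t) x"
  unfolding lexless_def using assms by (intro exI[of _ u]) (auto simp: shift_def)

lemma shift_source_unique:
  assumes "1 \<le> x u" "u \<noteq> t" "shift x u t = shift x u' t"
  shows "u' = u"
proof (rule ccontr)
  assume "u' \<noteq> u"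
  have "shift x u t u = shift x u' t u" using assms(3) by simp
  then show False using assms(1,2) \<open>u' \<noteq> u\<close> by (simp add: shift_apply)
qed

section \<open>Lex-least divisors\<close>

definition deg_divisors :: "nat \<Rightarrow> nat \<Rightarrow> (nat \<Rightarrow> nat) \<Rightarrow> (nat \<Rightarrow> nat) set" where
  "deg_divisors n d w = {m \<in> V n d. \<forall>i. m i \<le> w i}"

text \<open>All of \<open>\<tau>\<close> beyond its first nonzero coordinate is as large as \<open>w\<close> permits: this
  characterizes the lex-least element of \<open>deg_divisors n d w\<close>.\<close>
definition tail_saturated :: "nat \<Rightarrow> (nat \<Rightarrow> nat) \<Rightarrow> (nat \<Rightarrow> nat) \<Rightarrow> bool" where
  "tail_saturated n \<tau> w \<longleftrightarrow> (\<forall>u t. u < t \<longrightarrow> t < n \<longrightarrow> 0 < \<tau> u \<longrightarrow> w t \<le> \<tau> t)"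

lemma finite_deg_divisors: "finite (deg_divisors n d w)"
proof -
  let ?M = "sum w {..<n}"
  have inj: "inj_on (\<lambda>m. map m [0..<n]) (deg_divisors n d w)"
  proof (rule inj_onI)
    fix m m' assume "m \<in> deg_divisors n d w" "m' \<in> deg_divisors n d w"
      "map m [0..<n] = map m' [0..<n]"
    then show "m = m'"
      by (intro vec_eqI[of n]) (auto simp: map_eq_conv deg_divisors_def V_def)
  qed
  have "(\<lambda>m. map m [0..<n]) ` deg_divisors n d w \<subseteq> {xs. set xs \<subseteq> {..?M} \<and> length xs = n}"
  proof clarsimp
    fix m i assume "m \<in> deg_divisors n d w" "i < n"
    then have "m i \<le> w i" by (auto simp: deg_divisors_def)
    also have "w i \<le> ?M" using \<open>i < n\<close> by (intro member_le_sum) auto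
    finally show "m i \<le> ?M" .
  qed
  then have "finite ((\<lambda>m. map m [0..<n]) ` deg_divisors n d w)"
    by (rule finite_subset) (rule finite_lists_length_eq, simp)
  then show ?thesis using inj finite_imageD by blast
qed

lemma tail_saturated_exists:
  assumes "x \<in> deg_divisors n d w"
  shows "\<exists>\<tau>\<in>deg_divisors n d w. tail_saturated n \<tau> w"
proof -
  obtain \<tau> where \<tau>: "\<tau> \<in> deg_divisors n d w" "\<forall>b\<in>deg_divisors n d w. \<not> lexless n b \<tau>"
    using lex_minimal_exists[OF finite_deg_divisors, of n d w] assms by blast
  have "tail_saturated n \<tau> w"
    unfolding tail_saturated_def
  proof (intro allI impI, rule ccontr)
    fix u t assume ut: "u < t" "t < n" "0 < \<tau> u" "\<not> w t \<le> \<tau> t"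
    have "shift \<tau> u t \<in> deg_divisors n d w"
      using \<tau>(1) ut shift_in_V[of \<tau> n d u t]
      by (auto simp: deg_divisors_def shift_apply) (meson diff_le_self le_trans)
    moreover have "lexless n (shift \<tau> u t) \<tau>" using ut by (intro shift_lexless) auto
    ultimately show False using \<tau>(2) by blast
  qed
  then show ?thesis using \<tau> by blast
qed

lemma tail_saturated_lex_minimal:
  assumes "tail_saturated n \<tau> w" "\<tau> \<in> deg_divisors n d w" "m \<in> deg_divisors n d w"
  shows "\<not> lexless n m \<tau>"
proof
  assume "lexless n m \<tau>"
  then obtain j where j: "j < n" "\<forall>i<j. m i = \<tau> i" "m j < \<tau> j" by (auto simp: lexless_def)
  obtain t where t: "j < t" "t < n" "\<tau> t < m t"
    using same_sum_tail_excess[of m n \<tau> j] j assms(2,3) by (auto simp: deg_divisors_def V_def)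
  have "w t \<le> \<tau> t" using assms(1) j t unfolding tail_saturated_def by auto
  moreover have "m t \<le> w t" using assms(3) by (auto simp: deg_divisors_def)
  ultimately show False using t by simp
qed

lemma tail_saturated_lex_le:
  assumes "tail_saturated n \<tau> w" "\<tau> \<in> deg_divisors n d w" "m \<in> deg_divisors n d w"
  shows "m = \<tau> \<or> lexless n \<tau> m"
  using tail_saturated_lex_minimal[OF assms] lexless_total[of n \<tau> m] assms(2,3)
  by (auto simp: deg_divisors_def V_def)

lemma tail_saturated_unique:
  assumes "tail_saturated n \<tau> w" "\<tau> \<in> deg_divisors n d w"
    "tail_saturated n \<sigma> w" "\<sigma> \<in> deg_divisors n d w"
  shows "\<sigma> = \<tau>"
  using tail_saturated_lex_le[OF assms(1,2,4)] tail_saturated_lex_minimal[OF assms(3,4,2)] by blast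

lemma tail_saturated_cofactor_lex_maximal:
  assumes "tail_saturated n \<tau> w" "\<tau> \<in> deg_divisors n d w" "m \<in> deg_divisors n d w"
    "sum w {..<n} = 2 * d"
  shows "\<not> lexless n (\<lambda>i. w i - \<tau> i) m"
proof
  let ?R = "\<lambda>i. w i - \<tau> i"
  assume "lexless n ?R m"
  then obtain j where j: "j < n" "\<forall>i<j. ?R i = m i" "?R j < m j" by (auto simp: lexless_def)
  have le: "\<forall>i. \<tau> i \<le> w i" "\<forall>i. m i \<le> w i" using assms(2,3) by (auto simp: deg_divisors_def)
  have "sum ?R {..<n} = d"
    using sum_subtractf_nat[of "{..<n}" \<tau> w] le(1) assms(2,4) by (auto simp: deg_divisors_def V_def)
  then obtain t where t: "j < t" "t < n" "m t < ?R t"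
    using same_sum_tail_excess[of ?R n m j] j assms(3) by (auto simp: deg_divisors_def V_def)
  have "0 < \<tau> j" using j(3) le(2)[rule_format, of j] by linarith
  then have "w t \<le> \<tau> t" using assms(1) j t unfolding tail_saturated_def by auto
  then show False using t by simp
qed

lemma lex_minimal_divisor_avoiding:
  assumes "m \<in> deg_divisors n d w" "m \<noteq> a" "lexless n m x"
  obtains \<mu> where "\<mu> \<in> deg_divisors n d w" "\<mu> \<noteq> a" "lexless n \<mu> x"
    "\<forall>b\<in>deg_divisors n d w. b \<noteq> a \<longrightarrow> \<not> lexless n b \<mu>"
proof -
  obtain \<mu> where \<mu>: "\<mu> \<in> deg_divisors n d w - {a}" "\<forall>b\<in>deg_divisors n d w - {a}. \<not> lexless n b \<mu>"
    using lex_minimal_exists[of "deg_divisors n d w - {a}" n] finite_deg_divisors assms(1,2)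
    by blast
  then have "\<mu> = m \<or> lexless n \<mu> m"
    using lexless_total[of n \<mu> m] assms(1,2) by (auto simp: deg_divisors_def V_def)
  then show thesis using that \<mu> assms(3) lexless_trans by blast
qed

lemma tail_saturated_vanishes_below:
  assumes "tail_saturated n y w" "\<zeta> < n" "y \<zeta> < w \<zeta>"
  shows "\<forall>i<\<zeta>. y i = 0"
  using assms unfolding tail_saturated_def by (meson not_le not_gr0)

lemma lexless_cofactor_support:
  assumes "m \<in> V n d" "x \<in> V n d" "\<forall>i. m i \<le> x i + w i" "lexless n m x"
  shows "\<exists>u t. u < t \<and> t < n \<and> 1 \<le> x u \<and> 1 \<le> w t"
proof -
  obtain j where j: "j < n" "\<forall>i<j. m i = x i" "m j < x j" using assms(4) by (auto simp: lexless_def)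
  obtain t where t: "j < t" "t < n" "x t < m t"
    using same_sum_tail_excess[of m n x j] j assms(1,2) by (auto simp: V_def)
  have "1 \<le> w t" using assms(3)[rule_format, of t] t by linarith
  moreover have "1 \<le> x j" using j by linarith
  ultimately show ?thesis using t by blast
qed

section \<open>Chains and the faces of a facet\<close>

lemma node_0: "node ls 0 = (\<lambda>_. 0)"
  by (simp add: node_def)

lemma node_Suc: "node ls (Suc j) = (\<lambda>t. node ls j t + (ls ! j) t)"
  by (simp add: node_def)

lemma sum_node:
  assumes "set ls \<subseteq> V n d" "j \<le> length ls"
  shows "sum (node ls j) {..<n} = d * j"
  using assms(2)
proof (induction j)
  case 0
  then show ?case by (simp add: node_0)
next
  case (Suc j)
  then have "ls ! j \<in> V n d" using assms(1) by (auto dest: nth_mem)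
  then show ?case using Suc by (auto simp: node_Suc V_def sum.distrib)
qed

lemma chains_same_length:
  assumes "p \<in> chains n d lam" "q \<in> chains n d lam" "0 < d"
  shows "length q = length p"
proof -
  have "sum lam {..<n} = d * length p" "sum lam {..<n} = d * length q"
    using sum_node[of p n d "length p"] sum_node[of q n d "length q"] assms(1,2)
    by (auto simp: chains_def)
  then show ?thesis using assms(3) by simp
qed

lemma node_eq_imp_index_eq:
  assumes "set p \<subseteq> V n d" "set q \<subseteq> V n d" "0 < d" "j \<le> length p" "j' \<le> length q"
    "node q j' = node p j"
  shows "j' = j"
proof -
  have "sum (node q j') {..<n} = d * j'" "sum (node p j) {..<n} = d * j"
    using sum_node[OF assms(1,4)] sum_node[OF assms(2,5)] by auto
  then show ?thesis using assms(3,6) by simp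
qed

lemma link_eq_of_node_eq:
  assumes "node q m = node p m" "node q (Suc m) = node p (Suc m)"
  shows "q ! m = p ! m"
proof
  fix t
  have "node q m t + (q ! m) t = node p m t + (p ! m) t"
    using assms(2) by (simp add: node_Suc fun_eq_iff)
  then show "(q ! m) t = (p ! m) t" using assms(1) by simp
qed

lemma node_eq_of_prefix:
  assumes "\<forall>m<j. q ! m = p ! m"
  shows "node q j = node p j"
  using assms by (auto simp: node_def fun_eq_iff intro!: sum.cong)

lemma node_eq_of_pair_replacement:
  assumes "\<forall>m<j. m \<noteq> h \<longrightarrow> m \<noteq> Suc h \<longrightarrow> q ! m = p ! m"
    "\<forall>t. (q ! h) t + (q ! Suc h) t = (p ! h) t + (p ! Suc h) t"
    "Suc (Suc h) \<le> j"
  shows "node q j = node p j"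
  using assms(3,1)
proof (induction j rule: dec_induct)
  case base
  have "node q h = node p h" using base by (intro node_eq_of_prefix) auto
  then show ?case using assms(2) by (simp add: node_Suc fun_eq_iff add.assoc)
next
  case (step j)
  then have "node q j = node p j" by auto
  moreover have "q ! j = p ! j" using step by auto
  ultimately show ?case by (simp add: node_Suc)
qed

lemma adeg_card: "adeg a ls = card {j. j < length ls \<and> ls ! j = a}"
  by (simp add: adeg_def length_filter_conv_card)

lemma adeg_le_of_replacement:
  assumes "length q = length p" "\<forall>j<length p. j \<notin> W \<longrightarrow> q ! j = p ! j"
    "\<forall>j\<in>W. j < length p \<longrightarrow> p ! j \<noteq> a"
  shows "adeg a p \<le> adeg a q"
proof -
  have "{j. j < length p \<and> p ! j = a} \<subseteq> {j. j < length q \<and> q ! j = a}" using assms by auto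
  then show ?thesis unfolding adeg_card by (rule card_mono[rotated]) simp
qed

lemma adeg_eq_replacement_avoids:
  assumes "length q = length p" "\<forall>j<length p. j \<notin> W \<longrightarrow> q ! j = p ! j"
    "\<forall>j\<in>W. j < length p \<longrightarrow> p ! j \<noteq> a" "adeg a q \<le> adeg a p"
  shows "\<forall>j\<in>W. j < length p \<longrightarrow> q ! j \<noteq> a"
proof -
  let ?Ap = "{j. j < length p \<and> p ! j = a}" and ?Aq = "{j. j < length q \<and> q ! j = a}"
  have sub: "?Ap \<subseteq> ?Aq" using assms(1-3) by auto
  moreover have "card ?Aq \<le> card ?Ap" using assms(4) unfolding adeg_card .
  ultimately have eq: "?Ap = ?Aq" using card_seteq[of ?Aq ?Ap] by simp
  show ?thesis
  proof (intro ballI impI notI)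
    fix j assume j: "j \<in> W" "j < length p" "q ! j = a"
    then have "j \<in> ?Ap" using eq assms(1) by simp
    then show False using assms(3) j by simp
  qed
qed

lemma adeg_less_of_replacement:
  assumes "length q = length p" "\<forall>j<length p. j \<notin> W \<longrightarrow> q ! j = p ! j"
    "\<forall>j\<in>W. j < length p \<longrightarrow> q ! j \<noteq> a" "j0 \<in> W" "j0 < length p" "p ! j0 = a"
  shows "adeg a q < adeg a p"
proof -
  let ?Ap = "{j. j < length p \<and> p ! j = a}" and ?Aq = "{j. j < length q \<and> q ! j = a}"
  have "?Aq \<subseteq> ?Ap" using assms by auto
  moreover have "j0 \<in> ?Ap" "j0 \<notin> ?Aq" using assms by auto
  ultimately have "?Aq \<subset> ?Ap" by blast
  then show ?thesis unfolding adeg_card by (intro psubset_card_mono) auto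
qed

lemma nodes_agree_off_face:
  assumes pc: "p \<in> chains n d lam" and qc: "q \<in> chains n d lam" and "0 < d"
    and sub: "labelled_face p ({1..<length p} - D) \<subseteq> open_chain q"
    and j: "j \<le> length p" "j \<notin> D"
  shows "node q j = node p j"
proof -
  have len: "length q = length p" using chains_same_length[OF pc qc \<open>0 < d\<close>] .
  have sp: "set p \<subseteq> V n d" and sq: "set q \<subseteq> V n d" using pc qc by (auto simp: chains_def)
  consider "j = 0" | "j = length p" | "j \<in> {1..<length p} - D" using j by fastforce
  then show ?thesis
  proof cases
    case 1
    then show ?thesis by (simp add: node_0)
  next
    case 2
    then show ?thesis using pc qc len by (simp add: chains_def)
  next
    case 3
    then have "node p j \<in> open_chain q" using sub unfolding labelled_face_def by auto
    then obtain j' where j': "j' \<in> {1..<length q}" "node p j = node q j'"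
      unfolding open_chain_def by auto
    then have "j' = j" using node_eq_imp_index_eq[OF sp sq \<open>0 < d\<close>, of j j'] j len by auto
    then show ?thesis using j' by simp
  qed
qed

lemma labelled_face_in_F_less_cap:
  assumes pc: "p \<in> chains n d lam" and qc: "q \<in> chains n d lam" and "0 < d"
    and less: "facet_less n a q p" and L: "L \<subseteq> {1..<length p}"
    and agree: "\<forall>j\<in>L. node q j = node p j"
  shows "labelled_face p L \<in> F_less_cap n d a lam p"
proof -
  have len: "length q = length p" using chains_same_length[OF pc qc \<open>0 < d\<close>] .
  have "labelled_face p L \<subseteq> open_chain q"
    unfolding labelled_face_def open_chain_def using L agree len by (auto intro!: image_eqI)
  moreover have "labelled_face p L \<subseteq> open_chain p"
    unfolding labelled_face_def open_chain_def using L by auto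
  ultimately show ?thesis using qc less unfolding F_less_cap_def F_less_def by auto
qed

lemma pair_replacement_face:
  assumes pc: "p \<in> chains n d lam" and "0 < d" and gk: "Suc g < length p"
    and mV: "m \<in> V n d" and m'V: "m' \<in> V n d"
    and sm: "\<forall>t. m t + m' t = (p ! g) t + (p ! Suc g) t"
    and less: "facet_less n a (p[g := m, Suc g := m']) p"
  shows "labelled_face p ({1..<length p} - {Suc g}) \<in> F_less_cap n d a lam p"
proof -
  let ?q = "p[g := m, Suc g := m']"
  have qg: "?q ! g = m" "?q ! Suc g = m'" using gk by (auto simp: nth_list_update)
  have qo: "\<And>j. j \<noteq> g \<Longrightarrow> j \<noteq> Suc g \<Longrightarrow> ?q ! j = p ! j" by (simp add: nth_list_update)
  have "set ?q \<subseteq> V n d"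
    using pc mV m'V set_update_subset_insert[of "p[g := m]" "Suc g" m']
      set_update_subset_insert[of p g m] by (auto simp: chains_def)
  have agree: "node ?q j = node p j" if "j \<noteq> Suc g" for j
  proof (cases "j \<le> g")
    case True
    then show ?thesis using qo by (intro node_eq_of_prefix) auto
  next
    case False
    then show ?thesis using qo qg sm that by (intro node_eq_of_pair_replacement[of j g]) auto
  qed
  have "?q \<in> chains n d lam"
    using \<open>set ?q \<subseteq> V n d\<close> agree[of "length p"] gk pc by (auto simp: chains_def)
  then show ?thesis
    by (rule labelled_face_in_F_less_cap[OF pc _ \<open>0 < d\<close> less]) (use agree in auto)
qed

text \<open>The face missing only node \<open>Suc g\<close> strictly contains any face missing \<open>Suc g\<close> and another
  node, so the latter cannot be a facet once the former lies in \<open>F_{<p} \<inter> p\<close>.\<close>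
lemma facet_blocks_pair_replacement:
  assumes pc: "p \<in> chains n d lam" and "0 < d" and gk: "Suc g < length p"
    and facet: "is_facet (F_less_cap n d a lam p) (labelled_face p ({1..<length p} - D))"
    and gD: "Suc g \<in> D" and jD: "j' \<in> D" "j' \<noteq> Suc g" "1 \<le> j'" "j' < length p"
    and mV: "m \<in> V n d" and m'V: "m' \<in> V n d"
    and sm: "\<forall>t. m t + m' t = (p ! g) t + (p ! Suc g) t"
  shows "\<not> facet_less n a (p[g := m, Suc g := m']) p"
proof
  let ?S = "labelled_face p ({1..<length p} - D)"
  let ?T = "labelled_face p ({1..<length p} - {Suc g})"
  assume "facet_less n a (p[g := m, Suc g := m']) p"
  then have "?T \<in> F_less_cap n d a lam p" using pair_replacement_face[OF pc \<open>0 < d\<close> gk mV m'V sm]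
    by blast
  moreover have "?S \<subseteq> ?T" unfolding labelled_face_def using gD by auto
  ultimately have "?T = ?S" using facet unfolding is_facet_def by blast
  moreover have "node p j' \<in> ?T" unfolding labelled_face_def using jD by auto
  ultimately obtain j where j: "j \<in> {1..<length p} - D" "node p j = node p j'"
    unfolding labelled_face_def by auto
  have "set p \<subseteq> V n d" using pc by (auto simp: chains_def)
  then have "j = j'" using node_eq_imp_index_eq[of p n d p j' j] j jD \<open>0 < d\<close> by auto
  then show False using j jD by auto
qed

lemma face_witness_window:
  assumes pc: "p \<in> chains n d lam" and "0 < d" and hk: "Suc (Suc h) < length p"
    and face: "labelled_face p ({1..<length p} - {Suc h, Suc (Suc h)}) \<in> F_less_cap n d a lam p"
  obtains q where "q \<in> chains n d lam" "facet_less n a q p" "length q = length p"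
    "\<forall>m<length p. m \<notin> {h, Suc h, Suc (Suc h)} \<longrightarrow> q ! m = p ! m"
    "\<forall>t. (q ! h) t + (q ! Suc h) t + (q ! Suc (Suc h)) t
       = (p ! h) t + (p ! Suc h) t + (p ! Suc (Suc h)) t"
proof -
  obtain q where qc: "q \<in> chains n d lam" and less: "facet_less n a q p"
    and sub: "labelled_face p ({1..<length p} - {Suc h, Suc (Suc h)}) \<subseteq> open_chain q"
    using face unfolding F_less_cap_def F_less_def by blast
  have agree: "node q j = node p j" if "j \<le> length p" "j \<notin> {Suc h, Suc (Suc h)}" for j
    using nodes_agree_off_face[OF pc qc \<open>0 < d\<close> sub that] .
  have "\<forall>m<length p. m \<notin> {h, Suc h, Suc (Suc h)} \<longrightarrow> q ! m = p ! m"
    using agree by (auto intro!: link_eq_of_node_eq)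
  moreover have "(q ! h) t + (q ! Suc h) t + (q ! Suc (Suc h)) t
       = (p ! h) t + (p ! Suc h) t + (p ! Suc (Suc h)) t" for t
  proof -
    have "node q (Suc (Suc (Suc h))) t = node p (Suc (Suc (Suc h))) t" "node q h t = node p h t"
      using agree[of "Suc (Suc (Suc h))"] agree[of h] hk by auto
    then show ?thesis by (simp add: node_Suc)
  qed
  ultimately show ?thesis using that qc less chains_same_length[OF pc qc \<open>0 < d\<close>] by blast
qed

section \<open>The removed monomial\<close>

locale removed_monomial =
  fixes n d :: nat and a :: "nat \<Rightarrow> nat"
  assumes n2: "n \<ge> 2" and d2: "d \<ge> 2" and aV: "a \<in> V n d"
    and sorted: "\<forall>i j. i \<le> j \<longrightarrow> j < n \<longrightarrow> a i \<le> a j"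
    and ne_first: "a \<noteq> (\<lambda>t. if t = n - 1 then d else 0)"
    and ne_second: "a \<noteq> (\<lambda>t. if t = n - 2 then 1 else if t = n - 1 then d - 1 else 0)"
    and ne_third: "a \<noteq> (\<lambda>t. if t = n - 2 then 2 else if t = n - 1 then d - 2 else 0)"
begin

definition lex_first :: "nat \<Rightarrow> nat" where
  "lex_first = (\<lambda>t. if t = n - 1 then d else 0)"

definition lex_second :: "nat \<Rightarrow> nat" where
  "lex_second = (\<lambda>t. if t = n - 2 then 1 else if t = n - 1 then d - 1 else 0)"

definition min_split :: "(nat \<Rightarrow> nat) \<Rightarrow> (nat \<Rightarrow> nat) \<Rightarrow> bool" where
  "min_split x y \<longleftrightarrow> (\<forall>m\<in>deg_divisors n d (\<lambda>i. x i + y i).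
      m \<noteq> a \<longrightarrow> (\<lambda>i. x i + y i - m i) \<noteq> a \<longrightarrow> \<not> lexless n m x)"

definition least_but_a :: "(nat \<Rightarrow> nat) \<Rightarrow> (nat \<Rightarrow> nat) \<Rightarrow> bool" where
  "least_but_a x w \<longleftrightarrow> (\<forall>m\<in>deg_divisors n d w. m \<noteq> a \<longrightarrow> \<not> lexless n m x)"

lemma a_vec: "vec n a" and a_sum: "sum a {..<n} = d"
  using aV by (auto simp: V_def)

lemma a_last_pos: "1 \<le> a (n - 1)"
proof (rule ccontr)
  assume "\<not> ?thesis"
  have "\<And>i. i < n \<Longrightarrow> a i \<le> a (n - 1)" using sorted by simp
  then have "\<forall>i<n. a i = 0" using \<open>\<not> 1 \<le> a (n - 1)\<close> by fastforce
  then have "sum a {..<n} = 0" by simp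
  then show False using a_sum d2 by simp
qed

lemma a_penultimate_pos: "1 \<le> a (n - 2)"
proof (rule ccontr)
  assume "\<not> ?thesis"
  have "\<And>i. i < n - 1 \<Longrightarrow> a i \<le> a (n - 2)" using sorted n2 by simp
  then have below: "\<forall>i<n-1. a i = 0" using \<open>\<not> 1 \<le> a (n - 2)\<close> by fastforce
  then have "a (n - 1) = d" using sum_supported_last[of n a] n2 a_sum by simp
  then have "a = (\<lambda>t. if t = n - 1 then d else 0)"
    using below a_vec by (intro vec_eqI[of n]) (auto simp: vec_def)
  then show False using ne_first by simp
qed

lemma a_concentrated_last_two:
  assumes "\<forall>i<n-2. a i = 0"
  shows "3 \<le> a (n - 2)"
proof (rule ccontr)
  assume small: "\<not> ?thesis"
  define c where "c = a (n - 2)"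
  have "a (n - 2) + a (n - 1) = d" using sum_supported_last_two[of n a] n2 assms a_sum by simp
  then have "a = (\<lambda>t. if t = n - 2 then c else if t = n - 1 then d - c else 0)"
    using assms a_vec n2 unfolding c_def by (intro vec_eqI[of n]) (auto simp: vec_def)
  moreover have "c = 1 \<or> c = 2" using small a_penultimate_pos unfolding c_def by auto
  ultimately show False using ne_second ne_third by auto
qed

lemma three_le_d: "3 \<le> d"
proof (rule ccontr)
  assume "\<not> ?thesis"
  then have d: "d = 2" using d2 by simp
  have ne: "n - 2 \<noteq> n - 1" "n - 2 < n" "n - 1 < n" using n2 by auto
  have "a (n-2) = 1" "a (n-1) = 1" "sum a ({..<n} - {n-2} - {n-1}) = 0"
    using sum_split_two[OF ne, of a] a_sum d a_penultimate_pos a_last_pos by linarith+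
  then have "a = (\<lambda>t. if t = n - 2 then 1 else if t = n - 1 then d - 1 else 0)"
    using a_vec d by (intro vec_eqI[of n]) (auto simp: vec_def)
  then show False using ne_second by simp
qed

lemma lex_first_V: "lex_first \<in> V n d"
proof -
  have "sum lex_first {..<n} = lex_first (n - 1)"
    using n2 by (intro sum_supported_last) (auto simp: lex_first_def)
  then show ?thesis using n2 by (auto simp: V_def vec_def lex_first_def)
qed

lemma lex_second_V: "lex_second \<in> V n d"
proof -
  have "sum lex_second {..<n} = lex_second (n - 2) + lex_second (n - 1)"
    using n2 by (intro sum_supported_last_two) (auto simp: lex_second_def)
  then show ?thesis using n2 d2 by (auto simp: V_def vec_def lex_second_def)
qed

lemma lex_second_ne_a: "lex_second \<noteq> a"
  using ne_second by (auto simp: lex_second_def)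

lemma lex_first_ne_a: "lex_first \<noteq> a"
  using ne_first by (auto simp: lex_first_def)

lemma lex_first_lexless_second: "lexless n lex_first lex_second"
  unfolding lexless_def using n2 three_le_d
  by (intro exI[of _ "n-2"]) (auto simp: lex_first_def lex_second_def)

lemma lex_first_minimal:
  assumes "m \<in> V n d"
  shows "\<not> lexless n m lex_first"
proof
  assume "lexless n m lex_first"
  then obtain j where j: "j < n" "\<forall>i<j. m i = lex_first i" "m j < lex_first j"
    by (auto simp: lexless_def)
  then have "j = n - 1" "\<forall>i<n-1. m i = 0" by (auto simp: lex_first_def split: if_splits)
  then have "sum m {..<n} = m (n - 1)" using n2 by (intro sum_supported_last) auto
  then show False using assms j \<open>j = n - 1\<close> by (auto simp: V_def lex_first_def)
qed

lemma lex_second_next: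
  assumes "m \<in> V n d" "\<not> lexless n lex_second m"
  shows "m = lex_second \<or> m = lex_first"
proof (rule ccontr)
  assume ne: "\<not> (m = lex_second \<or> m = lex_first)"
  then have "lexless n m lex_second"
    using lexless_total[of n m lex_second] assms lex_second_V by (auto simp: V_def)
  then obtain j where j: "j < n" "\<forall>i<j. m i = lex_second i" "m j < lex_second j"
    by (auto simp: lexless_def)
  have nn: "n - 2 < n - 1" using n2 by simp
  have "j = n - 2 \<or> j = n - 1" using j(3) by (auto simp: lex_second_def split: if_splits)
  then show False
  proof
    assume jj: "j = n - 2"
    have "\<And>i. i < n - 1 \<Longrightarrow> i < n - 2 \<or> i = n - 2" using n2 by arith
    then have below: "\<forall>i<n-1. m i = 0" using j jj nn by (fastforce simp: lex_second_def)
    then have "sum m {..<n} = m (n - 1)" using n2 by (intro sum_supported_last) auto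
    then have "m = lex_first"
      using below assms(1) by (intro vec_eqI[of n]) (auto simp: lex_first_def V_def vec_def)
    then show False using ne by simp
  next
    assume jj: "j = n - 1"
    then have below: "\<forall>i<n-2. m i = 0" "m (n-2) = 1" using j nn by (auto simp: lex_second_def)
    then have "sum m {..<n} = m (n - 2) + m (n - 1)" using n2 by (intro sum_supported_last_two) auto
    then have "m (n-1) = d - 1" using assms(1) below by (auto simp: V_def)
    then show False using j jj nn by (auto simp: lex_second_def)
  qed
qed

lemma least_but_a_shift_eq_a:
  assumes "least_but_a x (\<lambda>i. x i + y i)" "x \<in> V n d"
    "u < t" "t < n" "1 \<le> x u" "1 \<le> y t"
  shows "shift x u t = a"
proof (rule ccontr)
  assume "shift x u t \<noteq> a"
  moreover have "shift x u t \<in> deg_divisors n d (\<lambda>i. x i + y i)"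
    using shift_in_V[OF assms(2), of u t] assms(3-6) by (auto simp: deg_divisors_def shift_apply)
  moreover have "lexless n (shift x u t) x" using assms(3-5) by (intro shift_lexless)
  ultimately show False using assms(1) unfolding least_but_a_def by blast
qed

text \<open>If \<open>a\<close> is the lex-least divisor of \<open>x + y\<close>, its cofactor is lex-greatest, so no divisor
  other than \<open>a\<close> has cofactor \<open>a\<close>.\<close>
lemma min_split_least_but_a:
  assumes "x \<in> V n d" "y \<in> V n d" "min_split x y"
    "tail_saturated n a (\<lambda>i. x i + y i)" "a \<in> deg_divisors n d (\<lambda>i. x i + y i)"
  shows "least_but_a x (\<lambda>i. x i + y i)"
  unfolding least_but_a_def
proof (intro ballI impI notI)
  let ?s = "\<lambda>i. x i + y i"
  fix m assume mS: "m \<in> deg_divisors n d ?s" and ma: "m \<noteq> a" and lt: "lexless n m x"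
  have "(\<lambda>i. ?s i - m i) = a" using assms(3) mS ma lt unfolding min_split_def by blast
  then have "m = (\<lambda>i. ?s i - a i)"
    using mS by (auto simp: fun_eq_iff deg_divisors_def) (metis diff_diff_cancel)
  moreover have "x \<in> deg_divisors n d ?s" using assms(1) by (auto simp: deg_divisors_def)
  ultimately show False
    using tail_saturated_cofactor_lex_maximal[OF assms(4,5)] sum_add_V[OF assms(1,2)] lt by auto
qed

lemma cofactor_a_lex_first:
  assumes "tail_saturated n \<tau> w" "\<tau> \<in> deg_divisors n d w" "\<And>i. w i - \<tau> i = a i"
  shows "\<tau> = lex_first"
proof -
  have below: "\<forall>u<n-1. \<tau> u = 0"
  proof (intro allI impI, rule ccontr)
    fix u assume "u < n - 1" "\<tau> u \<noteq> 0"
    then have "w (n-1) \<le> \<tau> (n-1)" using assms(1) n2 unfolding tail_saturated_def by auto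
    then show False using assms(3)[of "n-1"] a_last_pos by simp
  qed
  then have "sum \<tau> {..<n} = \<tau> (n - 1)" using n2 by (intro sum_supported_last) auto
  then show ?thesis
    using below assms(2)
    by (intro vec_eqI[of n]) (auto simp: lex_first_def deg_divisors_def V_def vec_def)
qed

lemma min_split_lex_second:
  assumes xV: "x \<in> V n d" and split: "min_split x y"
    and \<tau>S: "\<tau> \<in> deg_divisors n d (\<lambda>i. x i + y i)" and \<tau>sat: "tail_saturated n \<tau> (\<lambda>i. x i + y i)"
    and \<tau>x: "\<tau> \<noteq> x" and \<tau>a: "\<tau> \<noteq> a"
  shows "x = lex_second"
proof -
  let ?s = "\<lambda>i. x i + y i"
  have "x \<in> deg_divisors n d ?s" using xV by (auto simp: deg_divisors_def)
  then have lt: "lexless n \<tau> x" using tail_saturated_lex_le[OF \<tau>sat \<tau>S] \<tau>x by auto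
  have "(\<lambda>i. ?s i - \<tau> i) = a" using split \<tau>S \<tau>a lt unfolding min_split_def by blast
  then have cof: "\<And>i. ?s i - \<tau> i = a i" by (simp add: fun_eq_iff)
  have \<tau>first: "\<tau> = lex_first" using cofactor_a_lex_first[OF \<tau>sat \<tau>S cof] .
  have s: "?s i = a i + lex_first i" for i
    using cof[of i] \<tau>S \<tau>first by (auto simp: deg_divisors_def) (metis le_add_diff_inverse2)
  have last: "n - 1 \<noteq> n - 2" using n2 by arith
  have "lex_second \<in> deg_divisors n d ?s"
    using lex_second_V a_penultimate_pos s by (auto simp: deg_divisors_def lex_second_def lex_first_def)
  moreover have "(\<lambda>i. ?s i - lex_second i) \<noteq> a"
  proof
    assume "(\<lambda>i. ?s i - lex_second i) = a"
    then have "?s (n - 1) - lex_second (n - 1) = a (n - 1)" by metis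
    then show False using s[of "n - 1"] d2 last by (simp add: lex_second_def lex_first_def)
  qed
  ultimately have "\<not> lexless n lex_second x"
    using split lex_second_ne_a unfolding min_split_def by blast
  moreover have "x \<noteq> lex_first" using lt \<tau>first lexless_irrefl by blast
  ultimately show ?thesis using lex_second_next[OF xV] by blast
qed

lemma shift_family_to_a_absurd:
  assumes yV: "y \<in> V n d" and t: "t < n" "y t = 0"
    and shifts: "\<And>v. 1 \<le> y v \<Longrightarrow> v < t \<and> shift y v t = a"
  shows False
proof -
  obtain v0 where v0: "v0 < n" "1 \<le> y v0" using V_support_exists[OF yV] d2 by auto
  have "v0 \<noteq> t" using v0 t by auto
  show False
  proof (cases "\<exists>v1. v1 \<noteq> v0 \<and> v1 < n \<and> 1 \<le> y v1")
    case True
    then obtain v1 where "v1 \<noteq> v0" "1 \<le> y v1" by auto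
    then show False using shift_source_unique[of y v0 t v1] shifts v0(2) \<open>v0 \<noteq> t\<close> by metis
  next
    case False
    then have "\<not> y v0 < sum y {..<n}" using exists_other_support[of y v0 n] by blast
    then have "d \<le> y v0" using yV by (simp add: V_def)
    have "a = shift y v0 t" using shifts v0 by simp
    then have "a v0 = y v0 - 1" "a t = 1" using \<open>v0 \<noteq> t\<close> t by (simp_all add: shift_apply)
    moreover have "a v0 \<le> a t" using sorted shifts[OF v0(2)] t by auto
    ultimately show False using \<open>d \<le> y v0\<close> three_le_d by simp
  qed
qed

lemma tail_saturated_first_link_absurd:
  assumes xV: "x \<in> V n d" and yV: "y \<in> V n d" and zV: "z \<in> V n d" and split: "min_split y z"
    and mV: "m \<in> V n d" and m_le: "\<forall>i. m i \<le> x i + y i + z i" and m_lt: "lexless n m x"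
    and x_sat: "tail_saturated n x (\<lambda>i. x i + y i)"
  shows False
proof -
  let ?s' = "\<lambda>i. y i + z i"
  obtain u t where ut: "u < t" "t < n" "1 \<le> x u" "1 \<le> ?s' t"
    using lexless_cofactor_support[OF mV xV, of ?s'] m_le m_lt by (auto simp: add.assoc)
  have "x t + y t \<le> x t" using x_sat ut unfolding tail_saturated_def by auto
  then have yt: "y t = 0" and zt: "1 \<le> z t" using ut by auto
  have y_support: "v < t" if "1 \<le> y v" for v
  proof (rule ccontr)
    assume "\<not> v < t"
    then have "u < v" "v < n" using ut that V_support_lt[OF yV, of v] by auto
    then have "x v + y v \<le> x v" using x_sat ut unfolding tail_saturated_def by auto
    then show False using that by simp
  qed
  have shifts: "shift y v t \<in> deg_divisors n d ?s' \<and> lexless n (shift y v t) y" if "1 \<le> y v" for v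
    using shift_in_V[OF yV, of v t] shift_lexless[of v t n y] y_support[OF that] that ut zt
    by (auto simp: deg_divisors_def shift_apply)
  have yS: "y \<in> deg_divisors n d ?s'" using yV by (auto simp: deg_divisors_def)
  obtain \<sigma> where \<sigma>S: "\<sigma> \<in> deg_divisors n d ?s'" and \<sigma>sat: "tail_saturated n \<sigma> ?s'"
    using tail_saturated_exists[OF yS] by blast
  obtain v0 where "1 \<le> y v0" using V_support_exists[OF yV] d2 by auto
  then have "\<sigma> \<noteq> y" using tail_saturated_lex_minimal[OF \<sigma>sat \<sigma>S] shifts by blast
  show False
  proof (cases "\<sigma> = a")
    case False
    then have "y = lex_second" using min_split_lex_second[OF yV split \<sigma>S \<sigma>sat \<open>\<sigma> \<noteq> y\<close>] by simp
    moreover have "n - 1 \<noteq> n - 2" using n2 by arith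
    ultimately have "n - 1 < t" using y_support[of "n - 1"] d2 by (simp add: lex_second_def)
    then show False using ut by simp
  next
    case True
    then have y_least: "least_but_a y ?s'"
      using min_split_least_but_a[OF yV zV split] \<sigma>sat \<sigma>S by simp
    have "v < t \<and> shift y v t = a" if "1 \<le> y v" for v
      using least_but_a_shift_eq_a[OF y_least yV y_support[OF that] ut(2) that zt]
        y_support[OF that]
      by simp
    then show False using shift_family_to_a_absurd[OF yV ut(2) yt] by blast
  qed
qed

lemma exists_divisor_below:
  assumes a_le: "\<forall>i. a i \<le> s i" and q: "\<zeta> < q" "q < n" "a q < s q"
    and \<mu>: "\<forall>i<\<zeta>. \<mu> i = a i" "a \<zeta> < \<mu> \<zeta>"
  shows "\<exists>c\<in>deg_divisors n d s. c \<noteq> a \<and> lexless n c \<mu>"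
proof -
  have "\<exists>r. r \<noteq> q \<and> r < n \<and> 1 \<le> a r"
  proof (cases "q = n - 1")
    case True
    then show ?thesis using n2 a_penultimate_pos by (intro exI[of _ "n - 2"]) auto
  next
    case False
    then show ?thesis using n2 a_last_pos by (intro exI[of _ "n - 1"]) auto
  qed
  then obtain r where r: "r \<noteq> q" "r < n" "1 \<le> a r" by blast
  let ?c = "shift a r q"
  have "?c \<in> deg_divisors n d s"
    using shift_in_V[OF aV r(1,2) q(2) r(3)] a_le q
    by (auto simp: deg_divisors_def shift_apply) (meson diff_le_self le_trans)
  moreover have "?c \<noteq> a"
  proof
    assume "?c = a"
    then have "?c q = a q" by simp
    then show False by (simp add: shift_apply)
  qed
  moreover have "lexless n ?c \<mu>"
  proof (cases "r < \<zeta>")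
    case True
    then show ?thesis unfolding lexless_def using r q \<mu>
      by (intro exI[of _ r]) (auto simp: shift_apply)
  next
    case False
    then show ?thesis unfolding lexless_def using r q \<mu>
      by (intro exI[of _ \<zeta>]) (auto simp: shift_apply)
  qed
  ultimately show ?thesis by blast
qed

lemma least_but_a_tail_saturated_link_absurd:
  assumes xV: "x \<in> V n d" and yV: "y \<in> V n d" and ya: "y \<noteq> a"
    and aS: "a \<in> deg_divisors n d (\<lambda>i. x i + y i)" and x_least: "least_but_a x (\<lambda>i. x i + y i)"
    and y_sat: "tail_saturated n y (\<lambda>i. y i + z i)"
    and mV: "m \<in> V n d" and ma: "m \<noteq> a" and m_le: "\<forall>i. m i \<le> x i + y i + z i"
    and m_lt: "lexless n m x"
  shows False
proof -
  let ?s = "\<lambda>i. x i + y i" and ?T = "\<lambda>i. x i + y i + z i"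
  have "m \<in> deg_divisors n d ?T" using mV m_le by (auto simp: deg_divisors_def)
  then obtain \<mu> where \<mu>S: "\<mu> \<in> deg_divisors n d ?T" and \<mu>a: "\<mu> \<noteq> a" and \<mu>_lt: "lexless n \<mu> x"
    and \<mu>_min: "\<forall>b\<in>deg_divisors n d ?T. b \<noteq> a \<longrightarrow> \<not> lexless n b \<mu>"
    using lex_minimal_divisor_avoiding[OF _ ma m_lt] by blast
  have \<mu>V: "\<mu> \<in> V n d" and \<mu>_le: "\<forall>i. \<mu> i \<le> ?T i" using \<mu>S by (auto simp: deg_divisors_def)
  have "\<mu> \<notin> deg_divisors n d ?s" using x_least \<mu>a \<mu>_lt unfolding least_but_a_def by blast
  then obtain \<zeta> where \<zeta>: "?s \<zeta> < \<mu> \<zeta>" using \<mu>V by (auto simp: deg_divisors_def not_le)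
  have \<zeta>n: "\<zeta> < n" using V_support_lt[OF \<mu>V, of \<zeta>] \<zeta> by simp
  have y_below: "\<forall>i<\<zeta>. y i = 0"
    using tail_saturated_vanishes_below[OF y_sat \<zeta>n] \<zeta> \<mu>_le[rule_format, of \<zeta>] by simp
  obtain w where w: "\<zeta> < w" "w < n" "\<mu> w < y w"
    using same_sum_tail_excess[of y n \<mu> \<zeta>] yV \<mu>V \<zeta>n y_below \<zeta> by (auto simp: V_def)
  have \<mu>\<zeta>: "1 \<le> \<mu> \<zeta>" using \<zeta> by simp
  have "shift \<mu> \<zeta> w \<in> deg_divisors n d ?T"
    using shift_in_V[OF \<mu>V, of \<zeta> w] w \<zeta>n \<mu>\<zeta> \<mu>_le
    by (auto simp: deg_divisors_def shift_apply) (meson diff_le_self le_trans)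
  moreover have "lexless n (shift \<mu> \<zeta> w) \<mu>" using w \<mu>\<zeta> by (intro shift_lexless)
  ultimately have "a = shift \<mu> \<zeta> w" using \<mu>_min by metis
  then have \<mu>_a: "\<forall>i<\<zeta>. \<mu> i = a i" "a \<zeta> = \<mu> \<zeta> - 1" using w by (auto simp: shift_apply)
  have a_le: "\<forall>i. a i \<le> ?s i" using aS by (auto simp: deg_divisors_def)
  show False
  proof (cases "\<exists>q. \<zeta> < q \<and> q < n \<and> a q < ?s q")
    case True
    then obtain c where "c \<in> deg_divisors n d ?s" "c \<noteq> a" "lexless n c \<mu>"
      using exists_divisor_below[OF a_le _ _ _ \<mu>_a(1)] \<mu>_a(2) \<mu>\<zeta> by fastforce
    then show False using x_least \<mu>_lt lexless_trans unfolding least_but_a_def by blast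
  next
    case False
    have "y i \<le> a i" if "i < n" for i
      using y_below \<zeta> \<mu>_a(2) False that
      by (cases i \<zeta> rule: linorder_cases) (auto simp: not_less dest: spec[of _ i])
    then have "y = a" using yV aV by (intro le_same_sum_eq[of n]) (auto simp: V_def)
    then show False using ya by simp
  qed
qed

lemma shift_to_a_supported_before_absurd:
  assumes xV: "x \<in> V n d"
    and a_sat: "tail_saturated n a (\<lambda>i. x i + y i)" and a_le: "\<forall>i. a i \<le> x i + y i"
    and a_eq: "a = shift y v t" and vt: "v < t" "t < n" "1 \<le> y v"
    and y_unique: "\<And>v'. v' < t \<Longrightarrow> 1 \<le> y v' \<Longrightarrow> v' = v"
    and x_shift: "\<And>u w. u < w \<Longrightarrow> w < n \<Longrightarrow> 1 \<le> x u \<Longrightarrow> 1 \<le> y w \<Longrightarrow> shift x u w = a"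
    and prev: "1 \<le> t" "1 \<le> a (t - 1)"
  shows False
proof -
  have ai: "a i = (if i = t then Suc (y t) else if i = v then y v - 1 else y i)" for i
    using a_eq by (simp add: shift_apply)
  have "1 \<le> y (t - 1)" using ai[of "t - 1"] prev vt by (auto split: if_splits)
  then have v: "v = t - 1" using y_unique[of "t - 1"] prev by simp
  have above: "x t' + y t' \<le> a t'" if "t - 1 < t'" "t' < n" for t'
    using a_sat that prev unfolding tail_saturated_def by simp
  have "x t + y t \<le> a t" using above[of t] vt prev by simp
  then have xt: "x t = 1" using a_le ai[of t]
    by (metis add_le_cancel_right le_add2 le_antisym plus_1_eq_Suc)
  show False
  proof (cases "t < n - 1")
    case True
    have "1 \<le> y (n - 1)" using ai[of "n - 1"] a_last_pos True v by (auto split: if_splits)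
    then have "shift x t (n - 1) = a" using x_shift[of t "n - 1"] True xt by simp
    then have "a t = x t - 1" using True by (auto simp: shift_apply dest: fun_cong[of _ _ t])
    then show False using ai[of t] xt by simp
  next
    case False
    then have tn: "t = n - 1" and vn: "v = n - 2" using vt v by auto
    have "\<forall>i<n-2. a i = 0"
    proof (intro allI impI, rule ccontr)
      fix i assume "i < n - 2" "a i \<noteq> 0"
      then have "1 \<le> y i" "i < t" using ai[of i] tn vn by (auto split: if_splits)
      then show False using y_unique \<open>i < n - 2\<close> vn by fastforce
    qed
    then have "3 \<le> a (n - 2)" by (rule a_concentrated_last_two)
    moreover have "a (n - 2) \<le> a (n - 1)" using sorted n2 by simp
    ultimately have a_big: "3 \<le> a (n - 1)" by simp
    then have "1 \<le> y (n - 1)" using ai[of "n - 1"] tn by simp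
    have "x (n - 1) < sum x {..<n}" using xt tn xV three_le_d by (simp add: V_def)
    then obtain u0 where u0: "u0 \<noteq> n - 1" "u0 < n" "1 \<le> x u0"
      using exists_other_support[of x "n - 1" n] by blast
    have "shift x u0 (n - 1) = a" using x_shift[of u0 "n - 1"] u0 \<open>1 \<le> y (n - 1)\<close> by simp
    then have "a (n - 1) = Suc (x (n - 1))"
      by (auto simp: shift_apply dest: fun_cong[of _ _ "n - 1"])
    then show False using xt tn a_big by simp
  qed
qed

lemma shift_to_a_vanishing_before_absurd:
  assumes xV: "x \<in> V n d" and a_sat: "tail_saturated n a (\<lambda>i. x i + y i)"
    and a_eq: "a = shift y v t" and vt: "v < t" "t < n"
    and x_shift: "\<And>u w. u < w \<Longrightarrow> w < n \<Longrightarrow> 1 \<le> x u \<Longrightarrow> 1 \<le> y w \<Longrightarrow> shift x u w = a"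
    and a_low: "\<forall>i<t. a i = 0"
  shows False
proof -
  have ai: "a i = (if i = t then Suc (y t) else if i = v then y v - 1 else y i)" for i
    using a_eq by (simp add: shift_apply)
  have t_low: "t < n - 1"
  proof (rule ccontr)
    assume "\<not> t < n - 1"
    then have "n - 2 < t" using n2 by arith
    then show False using a_low a_penultimate_pos by simp
  qed
  have x_high: "x t' = 0" if "t < t'" "t' < n" for t'
  proof -
    have "x t' + y t' \<le> a t'" using a_sat that ai[of t] unfolding tail_saturated_def by simp
    then show ?thesis using ai[of t'] that vt by (auto split: if_splits)
  qed
  have y_last: "1 \<le> y (n - 1)" using ai[of "n - 1"] a_last_pos t_low vt by (auto split: if_splits)
  have to_last: "shift x u (n - 1) = a" if "u < n" "1 \<le> x u" for u
  proof -
    have "u \<le> t" using x_high[of u] that by fastforce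
    then show ?thesis using x_shift[of u "n - 1"] that y_last t_low by simp
  qed
  obtain u0 where u0: "u0 < n" "1 \<le> x u0" using V_support_exists[OF xV] d2 by auto
  have u0_low: "u0 < n - 1" using x_high[of u0] u0 t_low by fastforce
  have "a (n - 1) = Suc (x (n - 1))" "a u0 = x u0 - 1"
    using to_last[OF u0] u0_low
    by (auto simp: shift_apply dest: fun_cong[of _ _ "n - 1"] fun_cong[of _ _ u0])
  moreover have "x (n - 1) = 0" using x_high[of "n - 1"] t_low n2 by simp
  moreover have "a u0 \<le> a (n - 1)" using sorted u0 by simp
  ultimately have "x u0 < sum x {..<n}" using xV three_le_d by (simp add: V_def)
  then obtain u1 where "u1 \<noteq> u0" "u1 < n" "1 \<le> x u1" using exists_other_support[of x u0 n] by blast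
  then show False using shift_source_unique[of x u0 "n - 1" u1] to_last u0 u0_low by simp
qed

lemma a_least_for_both_links_absurd:
  assumes xV: "x \<in> V n d" and yV: "y \<in> V n d" and ya: "y \<noteq> a"
    and a_sat: "tail_saturated n a (\<lambda>i. x i + y i)" and aS: "a \<in> deg_divisors n d (\<lambda>i. x i + y i)"
    and a_sat': "tail_saturated n a (\<lambda>i. y i + z i)" and aS': "a \<in> deg_divisors n d (\<lambda>i. y i + z i)"
    and x_least: "least_but_a x (\<lambda>i. x i + y i)" and y_least: "least_but_a y (\<lambda>i. y i + z i)"
  shows False
proof -
  have "y \<in> deg_divisors n d (\<lambda>i. y i + z i)" using yV by (auto simp: deg_divisors_def)
  then have "\<not> tail_saturated n y (\<lambda>i. y i + z i)" using tail_saturated_unique[OF a_sat' aS'] ya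
    by blast
  then obtain v t where vt: "v < t" "t < n" "1 \<le> y v" "1 \<le> z t"
    unfolding tail_saturated_def by auto
  have y_shift: "shift y v' t = a" if "v' < t" "1 \<le> y v'" for v'
    using least_but_a_shift_eq_a[OF y_least yV that(1) vt(2) that(2) vt(4)] .
  have y_unique: "v' = v" if "v' < t" "1 \<le> y v'" for v'
    using shift_source_unique[of y v t v'] y_shift[OF that] y_shift[OF vt(1,3)] vt by simp
  have x_shift: "shift x u w = a" if "u < w" "w < n" "1 \<le> x u" "1 \<le> y w" for u w
    using least_but_a_shift_eq_a[OF x_least xV that] .
  have a_le: "\<forall>i. a i \<le> x i + y i" using aS by (auto simp: deg_divisors_def)
  have a_eq: "a = shift y v t" using y_shift[OF vt(1,3)] by simp
  show False
  proof (cases "1 \<le> t \<and> 1 \<le> a (t - 1)")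
    case True
    then show False
      using shift_to_a_supported_before_absurd[OF xV a_sat a_le a_eq vt(1-3) y_unique x_shift]
      by blast
  next
    case False
    have "\<forall>i<t. a i = 0"
    proof (intro allI impI)
      fix i assume "i < t"
      then have "a i \<le> a (t - 1)" using sorted vt by simp
      then show "a i = 0" using False \<open>i < t\<close> by auto
    qed
    then show False using shift_to_a_vanishing_before_absurd[OF xV a_sat a_eq vt(1,2) x_shift]
      by blast
  qed
qed

lemma lower_first_link_lex_second:
  assumes xV: "x \<in> V n d" and yV: "y \<in> V n d" and zV: "z \<in> V n d"
    and xa: "x \<noteq> a" and ya: "y \<noteq> a" and xy: "min_split x y" and yz: "min_split y z"
    and mV: "m \<in> V n d" and ma: "m \<noteq> a" and m_le: "\<forall>i. m i \<le> x i + y i + z i"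
    and m_lt: "lexless n m x"
  shows "x = lex_second"
proof -
  let ?s = "\<lambda>i. x i + y i" and ?s' = "\<lambda>i. y i + z i"
  have xS: "x \<in> deg_divisors n d ?s" and yS: "y \<in> deg_divisors n d ?s'"
    using xV yV by (auto simp: deg_divisors_def)
  obtain \<tau> where \<tau>S: "\<tau> \<in> deg_divisors n d ?s" and \<tau>sat: "tail_saturated n \<tau> ?s"
    using tail_saturated_exists[OF xS] by blast
  obtain \<sigma> where \<sigma>S: "\<sigma> \<in> deg_divisors n d ?s'" and \<sigma>sat: "tail_saturated n \<sigma> ?s'"
    using tail_saturated_exists[OF yS] by blast
  consider "\<tau> = x" | "\<tau> \<noteq> x" "\<tau> \<noteq> a" | "\<tau> = a" by blast
  then show ?thesis
  proof cases
    case 1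
    then show ?thesis
      using tail_saturated_first_link_absurd[OF xV yV zV yz mV m_le m_lt] \<tau>sat by simp
  next
    case 2
    then show ?thesis using min_split_lex_second[OF xV xy \<tau>S \<tau>sat] by simp
  next
    case 3
    then have a_sat: "tail_saturated n a ?s" and aS: "a \<in> deg_divisors n d ?s" using \<tau>sat \<tau>S by auto
    have x_least: "least_but_a x ?s" using min_split_least_but_a[OF xV yV xy a_sat aS] .
    consider "\<sigma> = y" | "\<sigma> = a" | "\<sigma> \<noteq> y" "\<sigma> \<noteq> a" by blast
    then show ?thesis
    proof cases
      case 1
      then show ?thesis
        using least_but_a_tail_saturated_link_absurd[OF xV yV ya aS x_least _ mV ma m_le m_lt] \<sigma>sat
        by simp
    next
      case 2
      then have a_sat': "tail_saturated n a ?s'" and aS': "a \<in> deg_divisors n d ?s'"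
        using \<sigma>sat \<sigma>S by auto
      have y_least: "least_but_a y ?s'" using min_split_least_but_a[OF yV zV yz a_sat' aS'] .
      show ?thesis
        using a_least_for_both_links_absurd[OF xV yV ya a_sat aS a_sat' aS' x_least y_least]
        by blast
    next
      case 3
      then have "y = lex_second" using min_split_lex_second[OF yV yz \<sigma>S \<sigma>sat] by simp
      then have "lex_second \<in> deg_divisors n d ?s" using yV by (auto simp: deg_divisors_def)
      then have "\<not> lexless n lex_second x" using x_least lex_second_ne_a unfolding least_but_a_def
        by blast
      moreover have "x \<noteq> lex_first"
        using tail_saturated_lex_le[OF a_sat aS xS] xa lex_first_minimal[OF aV] by auto
      ultimately show ?thesis using lex_second_next[OF xV] by blast
    qed
  qed
qed

lemma not_min_split_lex_second: "\<not> min_split lex_second lex_second"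
proof
  assume split: "min_split lex_second lex_second"
  have "lex_first \<in> deg_divisors n d (\<lambda>i. lex_second i + lex_second i)"
    using lex_first_V three_le_d n2 by (auto simp: deg_divisors_def lex_first_def lex_second_def)
  moreover have "(\<lambda>i. lex_second i + lex_second i - lex_first i) \<noteq> a"
  proof
    assume h: "(\<lambda>i. lex_second i + lex_second i - lex_first i) = a"
    have "a = (\<lambda>t. if t = n - 2 then 2 else if t = n - 1 then d - 2 else 0)"
    proof
      fix t
      have "n - 2 \<noteq> n - 1" using n2 by arith
      then show "a t = (if t = n - 2 then 2 else if t = n - 1 then d - 2 else 0)"
        using fun_cong[OF h, of t] three_le_d by (auto simp: lex_first_def lex_second_def)
    qed
    then show False using ne_third by simp
  qed
  ultimately show False
    using split lex_first_ne_a lex_first_lexless_second unfolding min_split_def by blast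
qed

lemma lex_second_around_absurd:
  assumes yV: "y \<in> V n d" and ya: "y \<noteq> a"
    and split1: "min_split lex_second y" and split2: "min_split y lex_second"
  shows False
proof -
  consider "y = lex_second" | "y = lex_first" | "lexless n lex_second y"
    using lex_second_next[OF yV] by blast
  then show False
  proof cases
    case 1
    then show False using not_min_split_lex_second split1 by simp
  next
    case 2
    then have "lex_first \<in> deg_divisors n d (\<lambda>i. lex_second i + y i)"
      "(\<lambda>i. lex_second i + y i - lex_first i) = lex_second"
      using lex_first_V by (auto simp: deg_divisors_def)
    then show False
      using split1 lex_first_ne_a lex_second_ne_a lex_first_lexless_second unfolding min_split_def
      by auto
  next
    case 3
    have "lex_second \<in> deg_divisors n d (\<lambda>i. y i + lex_second i)"
      "(\<lambda>i. y i + lex_second i - lex_second i) = y"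
      using lex_second_V by (auto simp: deg_divisors_def)
    then show False using split2 ya lex_second_ne_a 3 unfolding min_split_def by auto
  qed
qed

lemma facet_pair_links_ne_a:
  assumes gg: "sumset (V n d - {a}) (V n d - {a}) = V n (2 * d)"
    and pc: "p \<in> chains n d lam" and gk: "Suc g < length p"
    and facet: "is_facet (F_less_cap n d a lam p) (labelled_face p ({1..<length p} - D))"
    and gD: "Suc g \<in> D" and jD: "j' \<in> D" "j' \<noteq> Suc g" "1 \<le> j'" "j' < length p"
  shows "p ! g \<noteq> a \<and> p ! Suc g \<noteq> a"
proof (rule ccontr)
  let ?x = "p ! g" and ?y = "p ! Suc g"
  assume "\<not> (?x \<noteq> a \<and> ?y \<noteq> a)"
  then obtain j0 where j0: "j0 \<in> {g, Suc g}" "p ! j0 = a" by auto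
  have "?x \<in> V n d" "?y \<in> V n d" using pc gk by (auto simp: chains_def dest: nth_mem)
  then have "vadd ?x ?y \<in> V n (2 * d)" by (auto simp: V_def vec_def vadd_def sum.distrib)
  then have "vadd ?x ?y \<in> sumset (V n d - {a}) (V n d - {a})" using gg by simp
  then obtain b c where bc: "b \<in> V n d - {a}" "c \<in> V n d - {a}" "vadd ?x ?y = vadd b c"
    unfolding sumset_def by blast
  let ?q = "p[g := b, Suc g := c]"
  have "adeg a ?q < adeg a p"
    using bc gk j0
    by (intro adeg_less_of_replacement[of ?q p "{g, Suc g}" _ j0]) (auto simp: nth_list_update)
  then have "facet_less n a ?q p" by (simp add: facet_less_def)
  moreover have "\<forall>t. b t + c t = ?x t + ?y t" using bc(3) by (simp add: vadd_def fun_eq_iff)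
  ultimately show False using facet_blocks_pair_replacement[OF pc _ gk facet gD jD] bc d2 by simp
qed

lemma facet_pair_min_split:
  assumes gg: "sumset (V n d - {a}) (V n d - {a}) = V n (2 * d)"
    and pc: "p \<in> chains n d lam" and gk: "Suc g < length p"
    and facet: "is_facet (F_less_cap n d a lam p) (labelled_face p ({1..<length p} - D))"
    and gD: "Suc g \<in> D" and jD: "j' \<in> D" "j' \<noteq> Suc g" "1 \<le> j'" "j' < length p"
  shows "min_split (p ! g) (p ! Suc g)"
  unfolding min_split_def
proof (intro ballI impI notI)
  let ?x = "p ! g" and ?y = "p ! Suc g" and ?W = "{g, Suc g}"
  fix m assume mS: "m \<in> deg_divisors n d (\<lambda>i. ?x i + ?y i)" and ma: "m \<noteq> a"
    and m'a: "(\<lambda>i. ?x i + ?y i - m i) \<noteq> a" and lt: "lexless n m ?x"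
  let ?m' = "\<lambda>i. ?x i + ?y i - m i"
  have xV: "?x \<in> V n d" and yV: "?y \<in> V n d" using pc gk by (auto simp: chains_def dest: nth_mem)
  have mV: "m \<in> V n d" and m_le: "\<forall>i. m i \<le> ?x i + ?y i" using mS by (auto simp: deg_divisors_def)
  have "sum ?m' {..<n} = sum (\<lambda>i. ?x i + ?y i) {..<n} - sum m {..<n}"
    using m_le by (intro sum_subtractf_nat) auto
  then have m'V: "?m' \<in> V n d" using xV yV mV by (auto simp: V_def vec_def sum.distrib)
  let ?q = "p[g := m, Suc g := ?m']"
  have off: "\<forall>j<length p. j \<notin> ?W \<longrightarrow> ?q ! j = p ! j"
    and off': "\<forall>j<length ?q. j \<notin> ?W \<longrightarrow> p ! j = ?q ! j" by (auto simp: nth_list_update)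
  have p_avoids: "\<forall>j\<in>?W. j < length p \<longrightarrow> p ! j \<noteq> a"
    using facet_pair_links_ne_a[OF assms] by auto
  have q_avoids: "\<forall>j\<in>?W. j < length ?q \<longrightarrow> ?q ! j \<noteq> a"
    using ma m'a gk by (auto simp: nth_list_update)
  have "adeg a ?q = adeg a p"
    using adeg_le_of_replacement[OF _ off p_avoids] adeg_le_of_replacement[OF _ off' q_avoids]
    by simp
  moreover have "seqless n ?q p"
    unfolding seqless_def using gk lt by (intro exI[of _ g]) (auto simp: nth_list_update)
  ultimately have "facet_less n a ?q p" by (simp add: facet_less_def)
  moreover have "\<forall>t. m t + ?m' t = ?x t + ?y t" using m_le by simp
  ultimately show False using facet_blocks_pair_replacement[OF pc _ gk facet gD jD mV m'V] d2
    by simp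
qed

lemma facet_window_links:
  assumes gg: "sumset (V n d - {a}) (V n d - {a}) = V n (2 * d)"
    and pc: "p \<in> chains n d lam" and hk: "Suc (Suc h) < length p"
    and facet: "is_facet (F_less_cap n d a lam p)
                  (labelled_face p ({1..<length p} - {Suc h, Suc (Suc h)}))"
  shows "p ! h \<noteq> a" "p ! Suc h \<noteq> a" "p ! Suc (Suc h) \<noteq> a"
    "min_split (p ! h) (p ! Suc h)" "min_split (p ! Suc h) (p ! Suc (Suc h))"
  using facet_pair_links_ne_a[OF gg pc _ facet, of h "Suc (Suc h)"]
    facet_pair_links_ne_a[OF gg pc _ facet, of "Suc h" "Suc h"]
    facet_pair_min_split[OF gg pc _ facet, of h "Suc (Suc h)"]
    facet_pair_min_split[OF gg pc _ facet, of "Suc h" "Suc h"] hk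
  by auto

text \<open>A chain below \<open>p\<close> through all nodes but \<open>Suc h, Suc (Suc h)\<close> differs from \<open>p\<close> only in
  the links \<open>h, Suc h, Suc (Suc h)\<close>; it cannot first differ in the last two, so its link \<open>h\<close>
  is a lex-smaller degree-\<open>d\<close> divisor of the sum of the three links of \<open>p\<close>.\<close>
lemma facet_window_smaller_link:
  assumes gg: "sumset (V n d - {a}) (V n d - {a}) = V n (2 * d)"
    and pc: "p \<in> chains n d lam" and hk: "Suc (Suc h) < length p"
    and facet: "is_facet (F_less_cap n d a lam p)
                  (labelled_face p ({1..<length p} - {Suc h, Suc (Suc h)}))"
  obtains m where "m \<in> V n d" "m \<noteq> a"
    "\<forall>i. m i \<le> (p ! h) i + (p ! Suc h) i + (p ! Suc (Suc h)) i" "lexless n m (p ! h)"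
proof -
  let ?x = "p ! h" and ?y = "p ! Suc h" and ?z = "p ! Suc (Suc h)"
  let ?W = "{h, Suc h, Suc (Suc h)}"
  note links = facet_window_links[OF assms]
  have "labelled_face p ({1..<length p} - {Suc h, Suc (Suc h)}) \<in> F_less_cap n d a lam p"
    using facet by (simp add: is_facet_def)
  then obtain q where qc: "q \<in> chains n d lam" and less: "facet_less n a q p"
    and len: "length q = length p" and off: "\<forall>m<length p. m \<notin> ?W \<longrightarrow> q ! m = p ! m"
    and window: "\<forall>t. (q ! h) t + (q ! Suc h) t + (q ! Suc (Suc h)) t = ?x t + ?y t + ?z t"
    using face_witness_window[OF pc _ hk] d2 by auto
  have p_avoids: "\<forall>j\<in>?W. j < length p \<longrightarrow> p ! j \<noteq> a" using links by auto
  have "adeg a p \<le> adeg a q" by (rule adeg_le_of_replacement[OF len off p_avoids])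
  then have "adeg a q \<le> adeg a p" and "seqless n q p" using less by (auto simp: facet_less_def)
  then have q_avoids: "\<forall>j\<in>?W. j < length p \<longrightarrow> q ! j \<noteq> a"
    using adeg_eq_replacement_avoids[OF len off p_avoids] by simp
  obtain j0 where j0: "j0 < length p" "\<forall>m<j0. q ! m = p ! m" "lexless n (q ! j0) (p ! j0)"
    using \<open>seqless n q p\<close> len unfolding seqless_def by auto
  have qV: "q ! j \<in> V n d" if "j < length p" for j using qc len that
    by (auto simp: chains_def dest: nth_mem)
  have "j0 \<in> ?W" using off j0 lexless_irrefl by metis
  moreover have "j0 \<noteq> Suc (Suc h)"
  proof
    assume j0h: "j0 = Suc (Suc h)"
    then have "q ! j0 = ?z" using j0(2) window by (auto simp: fun_eq_iff)
    then show False using j0(3) j0h lexless_irrefl by simp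
  qed
  moreover have "j0 \<noteq> Suc h"
  proof
    assume j0h: "j0 = Suc h"
    let ?m = "q ! Suc h" and ?m' = "q ! Suc (Suc h)"
    have sm: "?m i + ?m' i = ?y i + ?z i" for i using window j0(2) j0h
      by (metis add.assoc add_left_cancel lessI)
    then have "?m \<in> deg_divisors n d (\<lambda>i. ?y i + ?z i)" "(\<lambda>i. ?y i + ?z i - ?m i) = ?m'"
      using qV[of "Suc h"] hk
      by (auto simp: deg_divisors_def fun_eq_iff) (metis le_add1, metis add_diff_cancel_left')
    then have "\<not> lexless n ?m ?y" using links(5) q_avoids hk unfolding min_split_def by auto
    then show False using j0 j0h by simp
  qed
  ultimately have "j0 = h" by simp
  moreover have "(q ! h) i \<le> ?x i + ?y i + ?z i" for i
  proof -
    have "(q ! h) i \<le> (q ! h) i + (q ! Suc h) i + (q ! Suc (Suc h)) i" by simp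
    then show ?thesis using window by simp
  qed
  ultimately show thesis using that[of "q ! h"] qV[of h] q_avoids j0 hk by auto
qed

lemma facet_window_first_link:
  assumes gg: "sumset (V n d - {a}) (V n d - {a}) = V n (2 * d)"
    and pc: "p \<in> chains n d lam" and hk: "Suc (Suc h) < length p"
    and facet: "is_facet (F_less_cap n d a lam p)
                  (labelled_face p ({1..<length p} - {Suc h, Suc (Suc h)}))"
  shows "p ! h = lex_second"
proof -
  obtain m where m: "m \<in> V n d" "m \<noteq> a"
    "\<forall>i. m i \<le> (p ! h) i + (p ! Suc h) i + (p ! Suc (Suc h)) i" "lexless n m (p ! h)"
    using facet_window_smaller_link[OF assms] by blast
  have pV: "p ! j \<in> V n d" if "j < length p" for j
    using pc that by (auto simp: chains_def dest: nth_mem)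
  note links = facet_window_links[OF assms]
  show ?thesis
    using lower_first_link_lex_second[OF pV pV pV links(1,2,4,5) m] hk by simp
qed

end

theorem lemma3p6:
  fixes n d :: nat and a lam :: "nat \<Rightarrow> nat"
    and p :: "(nat \<Rightarrow> nat) list" and i :: nat
  assumes "n \<ge> 2" and "d \<ge> 2"
    and "a \<in> V n d"
    and "\<forall>i j. i \<le> j \<longrightarrow> j < n \<longrightarrow> a i \<le> a j"
    and "a \<noteq> (\<lambda>t. if t = n - 1 then d else 0)"
    and "a \<noteq> (\<lambda>t. if t = n - 2 then 1 else if t = n - 1 then d - 1 else 0)"
    and "a \<noteq> (\<lambda>t. if t = n - 2 then 2 else if t = n - 1 then d - 2 else 0)"
    and "sumset (V n d - {a}) (V n d - {a}) = V n (2 * d)"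
    and "lam \<in> gen_semigroup (V n d - {a})"
    and "p \<in> chains n d lam"
    and "adeg a p \<ge> 1"
    and "1 \<le> i" and "i + 1 < length p"
    and "is_facet (F_less_cap n d a lam p) (labelled_face p ({1..<length p} - {i, i + 1}))"
  shows "(i + 2 < length p \<longrightarrow>
           \<not> is_facet (F_less_cap n d a lam p) (labelled_face p ({1..<length p} - {i + 1, i + 2})))
       \<and> (i + 3 < length p \<longrightarrow>
           \<not> is_facet (F_less_cap n d a lam p) (labelled_face p ({1..<length p} - {i + 2, i + 3})))"
proof -
  interpret removed_monomial n d a using assms(1-7) by unfold_locales
  obtain h where i: "i = Suc h" using assms(12) by (cases i) auto
  note first_link = facet_window_first_link[OF assms(8,10)]
  note links = facet_window_links[OF assms(8,10)]
  have hk: "Suc (Suc h) < length p"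
    and facet: "is_facet (F_less_cap n d a lam p)
                  (labelled_face p ({1..<length p} - {Suc h, Suc (Suc h)}))"
    using assms(13,14) i by simp_all
  have yV: "p ! Suc h \<in> V n d" using assms(10) hk by (auto simp: chains_def dest: nth_mem)
  show ?thesis
  proof (intro conjI impI notI)
    assume "i + 2 < length p"
      "is_facet (F_less_cap n d a lam p) (labelled_face p ({1..<length p} - {i + 1, i + 2}))"
    then have "p ! Suc h = lex_second" using first_link[of "Suc h"] i by (simp add: numeral_2_eq_2)
    then show False
      using links(4)[OF hk facet] first_link[OF hk facet] not_min_split_lex_second by simp
  next
    assume "i + 3 < length p"
      "is_facet (F_less_cap n d a lam p) (labelled_face p ({1..<length p} - {i + 2, i + 3}))"
    then have "p ! Suc (Suc h) = lex_second" using first_link[of "Suc (Suc h)"] i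
      by (simp add: numeral_2_eq_2 numeral_3_eq_3)
    then show False
      using lex_second_around_absurd[OF yV links(2)[OF hk facet]] links(4,5)[OF hk facet]
        first_link[OF hk facet] by simp
  qed
qed

end
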